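(* Let $\kappa$ be an uncountable regular cardinal and let $\mathcal{I}$ be a $\kappa$-complete proper ideal on $\kappa$ containing every bounded subset of $\kappa$, and suppose $\mathcal{I}$ contains an unbounded subset of $\kappa$. Let $\nu\in\{2,\kappa\}$. Then the class of $\mathcal{I}$-analytic subsets of ${}^{\kappa}\nu$ is closed under unions of at most $2^\kappa$ sets.
   Context: Work in ZFC. For $\mu\in\{2,\kappa\}$, ${}^{\kappa}\mu$ is the set of functions $\kappa\to\mu$. For $f\colon D\to\mu$ with $D\in\mathcal{I}$ let $\mathbf{N}_f=\{x\in{}^{\kappa}\mu: f\subseteq x\}$; the $\mathcal{I}$-topology $\tau_{\mathcal{I}}$ on ${}^{\kappa}\mu$ is generated by these sets. A function ${}^{\kappa}\kappa\to{}^{\kappa}\nu$ is $\mathcal{I}$-continuous if it is continuous when both spaces carry $\tau_{\mathcal{I}}$. A set $A\subseteq{}^{\kappa}\nu$ is $\mathcal{I}$-analytic if either $A=\emptyset$ or there are a $\tau_{\mathcal{I}}$-closed set $C\subseteq{}^{\kappa}\kappa$ and an $\mathcal{I}$-continuous function $\Phi\colon{}^{\kappa}\kappa\to{}^{\kappa}\nu$ with $\Phi(C)=A$. *)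

theory Defs
  imports "HOL-Analysis.Analysis"
begin

text \<open>The cardinal kappa is represented by a cardinal well-order r on a type 'k
  (Field r = UNIV); ordinals below kappa are the elements of 'k.\<close>

definition uncountable_regular_cardinal :: "'k rel \<Rightarrow> bool" where
  "uncountable_regular_cardinal r \<longleftrightarrow>
     Card_order r \<and> Field r = UNIV \<and> \<not> countable (UNIV :: 'k set) \<and> regularCard r"

definition bounded_in :: "'k rel \<Rightarrow> 'k set \<Rightarrow> bool" where
  "bounded_in r A \<longleftrightarrow> (\<exists>\<beta>. \<forall>\<alpha>\<in>A. (\<alpha>, \<beta>) \<in> r)"

definition good_ideal :: "'k rel \<Rightarrow> 'k set set \<Rightarrow> bool" where
  "good_ideal r I \<longleftrightarrow>
     (\<forall>A B. A \<in> I \<longrightarrow> B \<subseteq> A \<longrightarrow> B \<in> I) \<and>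
     (\<forall>F. F \<subseteq> I \<longrightarrow> (card_of F, r) \<in> ordLess \<longrightarrow> \<Union>F \<in> I) \<and>
     UNIV \<notin> I \<and>
     (\<forall>A. bounded_in r A \<longrightarrow> A \<in> I)"

text \<open>The value set nu: either kappa itself (all of 'k), or the ordinal 2 = {0,1},
  i.e. the set of predecessors of the element of r having exactly two predecessors.\<close>
definition nu_choice :: "'k rel \<Rightarrow> 'k set \<Rightarrow> bool" where
  "nu_choice r V \<longleftrightarrow> V = UNIV \<or> (\<exists>t. V = underS r t \<and> card (underS r t) = 2)"

definition fspace :: "'k set \<Rightarrow> ('k \<Rightarrow> 'k) set" where
  "fspace V = {x. \<forall>a. x a \<in> V}"

text \<open>Basic open set N_f for f : D \<rightarrow> nu (f given by its values on D).\<close>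
definition Nbhd :: "'k set \<Rightarrow> 'k set \<Rightarrow> ('k \<Rightarrow> 'k) \<Rightarrow> ('k \<Rightarrow> 'k) set" where
  "Nbhd V D f = {x \<in> fspace V. \<forall>d\<in>D. x d = f d}"

definition I_topology :: "'k set set \<Rightarrow> 'k set \<Rightarrow> ('k \<Rightarrow> 'k) topology" where
  "I_topology I V = subtopology
      (topology_generated_by {Nbhd V D f | D f. D \<in> I \<and> f ` D \<subseteq> V}) (fspace V)"

definition I_analytic :: "'k set set \<Rightarrow> 'k set \<Rightarrow> ('k \<Rightarrow> 'k) set \<Rightarrow> bool" where
  "I_analytic I V A \<longleftrightarrow> A = {} \<or>
     (\<exists>C \<Phi>. closedin (I_topology I UNIV) C \<and>
            continuous_map (I_topology I UNIV) (I_topology I V) \<Phi> \<and> \<Phi> ` C = A)"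

end

(*
  Fix an unbounded U in the ideal. By regularity |U| = kappa, so the (nonempty) sets of the family
  can be indexed injectively by subsets of U. Via a bijection kappa x kappa = kappa, split each
  x : kappa -> kappa pointwise into a tag part and a content part: the set of points of U where the
  tag takes a fixed value selects a member A of the family, and the content part is fed to the
  closed set and continuous map witnessing that A is analytic. The selector depends only on x
  restricted to U, an element of the ideal, so it is locally constant in the I-topology, and gluing
  the witnesses along this clopen partition gives a single witness for the union. Nothing about the
  value set nu is used.
*)
theory Submission
  imports Defs
begin

lemma Union_Nbhd_UNIV:
  assumes "I \<noteq> {}"
  shows "\<Union>{Nbhd UNIV D f | D f. D \<in> I} = UNIV"
proof -
  obtain D where "D \<in> I" using assms by blast
  then have "x \<in> Nbhd UNIV D x" "Nbhd UNIV D x \<in> {Nbhd UNIV D f | D f. D \<in> I}" for x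
    by (auto simp: Nbhd_def fspace_def)
  then show ?thesis by blast
qed

lemma I_topology_UNIV:
  assumes "I \<noteq> {}"
  shows "I_topology I UNIV = topology_generated_by {Nbhd UNIV D f | D f. D \<in> I}"
  using Union_Nbhd_UNIV[OF assms]
  by (simp add: I_topology_def fspace_def flip: topology_generated_by_topspace)

lemma topspace_I_topology_UNIV:
  assumes "I \<noteq> {}"
  shows "topspace (I_topology I UNIV) = UNIV"
  using Union_Nbhd_UNIV[OF assms] by (simp add: I_topology_UNIV assms)

lemma openin_I_topology_UNIV_if_determined:
  assumes "D \<in> I" and determined: "\<And>x y. x \<in> W \<Longrightarrow> \<forall>d\<in>D. x d = y d \<Longrightarrow> y \<in> W"
  shows "openin (I_topology I UNIV) W"
proof -
  from \<open>D \<in> I\<close> have "I \<noteq> {}" by blast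
  have "openin (I_topology I UNIV) (Nbhd UNIV D x)" for x
    unfolding I_topology_UNIV[OF \<open>I \<noteq> {}\<close>]
    by (rule topology_generated_by_Basis) (use \<open>D \<in> I\<close> in blast)
  then have "openin (I_topology I UNIV) (\<Union>x\<in>W. Nbhd UNIV D x)"
    by blast
  moreover have "(\<Union>x\<in>W. Nbhd UNIV D x) = W"
    using determined by (auto simp: Nbhd_def fspace_def)
  ultimately show ?thesis by simp
qed

lemma continuous_map_I_topology_UNIV_comp:
  assumes "I \<noteq> {}"
  shows "continuous_map (I_topology I UNIV) (I_topology I UNIV) ((\<circ>) h)"
proof -
  let ?S = "{Nbhd UNIV D f | D f. D \<in> I}"
  have "continuous_map (I_topology I UNIV) (topology_generated_by ?S) ((\<circ>) h)"
  proof (rule continuous_on_generated_topo)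
    fix N assume "N \<in> ?S"
    then obtain D f where "D \<in> I" "N = Nbhd UNIV D f" by blast
    then show "openin (I_topology I UNIV) ((\<circ>) h -` N \<inter> topspace (I_topology I UNIV))"
      by (intro openin_I_topology_UNIV_if_determined)
        (auto simp: Nbhd_def fspace_def topspace_I_topology_UNIV[OF assms])
  qed (use Union_Nbhd_UNIV[OF assms] in auto)
  then show ?thesis by (simp add: I_topology_UNIV[OF assms])
qed

lemma openin_fibrewise:
  assumes "\<And>a. a \<in> K \<Longrightarrow> openin X {x \<in> topspace X. \<iota> x = a}" and "\<iota> \<in> topspace X \<rightarrow> K"
    and "\<And>a. a \<in> K \<Longrightarrow> openin X (W a)"
  shows "openin X {x \<in> topspace X. x \<in> W (\<iota> x)}"
proof -
  have "openin X (\<Union>a\<in>K. {x \<in> topspace X. \<iota> x = a} \<inter> W a)"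
    using assms(1,3) by (intro openin_Union) auto
  moreover have "(\<Union>a\<in>K. {x \<in> topspace X. \<iota> x = a} \<inter> W a) = {x \<in> topspace X. x \<in> W (\<iota> x)}"
    using assms(2) by auto
  ultimately show ?thesis by simp
qed

lemma continuous_map_fibrewise:
  assumes "\<And>a. a \<in> K \<Longrightarrow> openin X {x \<in> topspace X. \<iota> x = a}" and "\<iota> \<in> topspace X \<rightarrow> K"
    and "\<And>a. a \<in> K \<Longrightarrow> continuous_map X Y (f a)"
  shows "continuous_map X Y (\<lambda>x. f (\<iota> x) x)"
  unfolding continuous_map_def
proof (intro conjI allI impI)
  show "(\<lambda>x. f (\<iota> x) x) \<in> topspace X \<rightarrow> topspace Y"
    using assms(2,3) by (auto simp: continuous_map_def)
next
  fix V assume "openin Y V"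
  then have "openin X {x \<in> topspace X. x \<in> {y \<in> topspace X. f (\<iota> x) y \<in> V}}"
    using assms by (intro openin_fibrewise) (auto intro: openin_continuous_map_preimage)
  then show "openin X {x \<in> topspace X. f (\<iota> x) x \<in> V}"
    by simp
qed

lemma closedin_fibrewise:
  assumes "\<And>a. a \<in> K \<Longrightarrow> openin X {x \<in> topspace X. \<iota> x = a}" and "\<iota> \<in> topspace X \<rightarrow> K"
    and "\<And>a. a \<in> K \<Longrightarrow> closedin X (C a)"
  shows "closedin X {x \<in> topspace X. x \<in> C (\<iota> x)}"
proof -
  have "openin X {x \<in> topspace X. x \<in> topspace X - C (\<iota> x)}"
    using assms by (intro openin_fibrewise) (auto simp: closedin_def)
  moreover have "topspace X - {x \<in> topspace X. x \<in> C (\<iota> x)} =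
      {x \<in> topspace X. x \<in> topspace X - C (\<iota> x)}"
    by blast
  ultimately show ?thesis
    unfolding closedin_def by auto
qed

lemma Union_closed_continuous_images_fibrewise:
  assumes fibres: "\<And>a. a \<in> K \<Longrightarrow> openin X {x \<in> topspace X. \<iota> x = a}"
    and \<iota>: "\<iota> \<in> topspace X \<rightarrow> K"
    and q: "continuous_map X X' q"
    and C: "\<And>a. a \<in> K \<Longrightarrow> closedin X' (C a)"
    and f: "\<And>a. a \<in> K \<Longrightarrow> continuous_map X' Y (f a)"
    and onto: "\<And>a w. a \<in> K \<Longrightarrow> w \<in> topspace X' \<Longrightarrow> \<exists>x\<in>topspace X. \<iota> x = a \<and> q x = w"
  obtains C' \<Phi> where "closedin X C'" "continuous_map X Y \<Phi>" "\<Phi> ` C' = (\<Union>a\<in>K. f a ` C a)"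
proof
  let ?C' = "{x \<in> topspace X. x \<in> {y \<in> topspace X. q y \<in> C (\<iota> x)}}"
  let ?\<Phi> = "\<lambda>x. (f (\<iota> x) \<circ> q) x"
  show "closedin X ?C'"
    using fibres \<iota> closedin_continuous_map_preimage[OF q C]
    by (rule closedin_fibrewise[where C = "\<lambda>a. {y \<in> topspace X. q y \<in> C a}"])
  show "continuous_map X Y ?\<Phi>"
    using fibres \<iota> continuous_map_compose[OF q f]
    by (rule continuous_map_fibrewise[where f = "\<lambda>a. f a \<circ> q"])
  show "?\<Phi> ` ?C' = (\<Union>a\<in>K. f a ` C a)"
  proof (intro equalityI subsetI)
    fix y assume "y \<in> ?\<Phi> ` ?C'"
    then show "y \<in> (\<Union>a\<in>K. f a ` C a)"
      using \<iota> by auto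
  next
    fix y assume "y \<in> (\<Union>a\<in>K. f a ` C a)"
    then obtain a w where "a \<in> K" "w \<in> C a" "y = f a w" by blast
    moreover from this obtain x where "x \<in> topspace X" "\<iota> x = a" "q x = w"
      using onto C closedin_subset by blast
    ultimately show "y \<in> ?\<Phi> ` ?C'"
      by (auto intro!: image_eqI[of _ _ x])
  qed
qed

lemma card_of_unbounded_ordIso_UNIV:
  fixes r :: "'k rel"
  assumes "Card_order r" "Field r = UNIV" "regularCard r" "\<not> bounded_in r U"
  shows "(card_of U, card_of (UNIV :: 'k set)) \<in> ordIso"
proof -
  have wo: "wo_rel r"
    using assms(1) by (simp add: wo_rel_def card_order_on_well_order_on)
  have "cofinal U r"
    unfolding cofinal_def
  proof
    fix \<alpha> assume "\<alpha> \<in> Field r"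
    obtain \<beta> where "\<beta> \<in> U" "(\<beta>, \<alpha>) \<notin> r"
      using assms(4) unfolding bounded_in_def by blast
    moreover have "(\<alpha>, \<beta>) \<in> r \<or> (\<beta>, \<alpha>) \<in> r"
      using wo_rel.TOTALS[OF wo] assms(2) by simp
    moreover have "(\<alpha>, \<alpha>) \<in> r"
      using wo_rel.REFL[OF wo] assms(2) by (simp add: refl_on_def)
    ultimately show "\<exists>\<beta>\<in>U. \<alpha> \<noteq> \<beta> \<and> (\<alpha>, \<beta>) \<in> r"
      by auto
  qed
  then have "(card_of U, r) \<in> ordIso"
    using assms(2,3) by (simp add: regularCard_def)
  moreover have "(r, card_of (UNIV :: 'k set)) \<in> ordIso"
    using ordIso_symmetric[OF card_of_Field_ordIso[OF assms(1)]] assms(2) by simp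
  ultimately show ?thesis
    by (rule ordIso_transitive)
qed

lemma exists_label_determined_on:
  fixes U :: "'i set" and K :: "'a set" and c d :: 'b
  assumes "(card_of K, card_of (Pow U)) \<in> ordLeq" "K \<noteq> {}" "c \<noteq> d"
  obtains label :: "('i \<Rightarrow> 'b) \<Rightarrow> 'a"
  where "range label = K" "\<And>s t. \<forall>\<alpha>\<in>U. s \<alpha> = t \<alpha> \<Longrightarrow> label s = label t"
proof -
  obtain e where e: "inj_on e K" "e ` K \<subseteq> Pow U"
    using assms(1) card_of_ordLeq[of K "Pow U"] by auto
  obtain a\<^sub>0 where "a\<^sub>0 \<in> K" using assms(2) by blast
  define code where "code t = {\<alpha> \<in> U. t \<alpha> = c}" for t :: "'i \<Rightarrow> 'b"
  define label where "label t = (if code t \<in> e ` K then inv_into K e (code t) else a\<^sub>0)" for t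
  have "label s = label t" if "\<forall>\<alpha>\<in>U. s \<alpha> = t \<alpha>" for s t
  proof -
    from that have "code s = code t" by (auto simp: code_def)
    then show ?thesis by (simp add: label_def)
  qed
  moreover have "range label = K"
  proof (intro equalityI subsetI)
    fix a assume "a \<in> range label"
    then show "a \<in> K"
      using \<open>a\<^sub>0 \<in> K\<close> by (auto simp: label_def inv_into_into)
  next
    fix a assume "a \<in> K"
    have "code (\<lambda>\<alpha>. if \<alpha> \<in> e a then c else d) = e a"
      using e(2) \<open>a \<in> K\<close> assms(3) by (auto simp: code_def)
    then have "label (\<lambda>\<alpha>. if \<alpha> \<in> e a then c else d) = a"
      using e(1) \<open>a \<in> K\<close> by (simp add: label_def)
    then show "a \<in> range label"
      by (metis rangeI)
  qed
  ultimately show ?thesis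
    using that by blast
qed

lemma exists_coding_determined_on:
  fixes U :: "'k set" and K :: "'a set"
  assumes "infinite (UNIV :: 'k set)" "(card_of K, card_of (Pow U)) \<in> ordLeq" "K \<noteq> {}"
  obtains \<iota> :: "('k \<Rightarrow> 'k) \<Rightarrow> 'a" and h :: "'k \<Rightarrow> 'k"
  where "\<And>x. \<iota> x \<in> K" "\<And>x y. \<forall>\<alpha>\<in>U. x \<alpha> = y \<alpha> \<Longrightarrow> \<iota> x = \<iota> y"
    "\<And>a w. a \<in> K \<Longrightarrow> \<exists>x. \<iota> x = a \<and> h \<circ> x = w"
proof -
  obtain c d :: 'k where "c \<noteq> d"
    using assms(1) by (metis (full_types) finite.emptyI finite_insert ex_new_if_finite insertI1)
  obtain label :: "('k \<Rightarrow> 'k) \<Rightarrow> 'a"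
    where label: "range label = K" "\<And>s t. \<forall>\<alpha>\<in>U. s \<alpha> = t \<alpha> \<Longrightarrow> label s = label t"
    using exists_label_determined_on[OF assms(2,3) \<open>c \<noteq> d\<close>] by blast
  have "(card_of (UNIV :: ('k \<times> 'k) set), card_of (UNIV :: 'k set)) \<in> ordIso"
    using card_of_Times_same_infinite[OF assms(1)] by simp
  then obtain p :: "'k \<times> 'k \<Rightarrow> 'k" where "bij p"
    using card_of_ordIso by blast
  then have inv_p: "inv p (p z) = z" for z
    by (simp add: bij_is_inj)
  define \<iota> where "\<iota> x = label (fst \<circ> inv p \<circ> x)" for x
  define h where "h = snd \<circ> inv p"
  have "\<iota> x \<in> K" for x
    using label(1) by (auto simp: \<iota>_def)
  moreover have "\<iota> x = \<iota> y" if "\<forall>\<alpha>\<in>U. x \<alpha> = y \<alpha>" for x y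
    using that by (auto simp: \<iota>_def intro: label(2))
  moreover have "\<exists>x. \<iota> x = a \<and> h \<circ> x = w" if "a \<in> K" for a w
  proof -
    obtain t where "label t = a"
      using label(1) \<open>a \<in> K\<close> by blast
    then have "\<iota> (\<lambda>\<alpha>. p (t \<alpha>, w \<alpha>)) = a \<and> h \<circ> (\<lambda>\<alpha>. p (t \<alpha>, w \<alpha>)) = w"
      by (simp add: \<iota>_def h_def comp_def inv_p)
    then show ?thesis by blast
  qed
  ultimately show ?thesis
    using that by blast
qed

lemma I_analytic_Union_coded:
  fixes \<iota> :: "('k \<Rightarrow> 'k) \<Rightarrow> ('k \<Rightarrow> 'k) set" and h :: "'k \<Rightarrow> 'k"
  assumes "U \<in> I" and "{} \<notin> K" and "\<forall>A\<in>K. I_analytic I V A"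
    and \<iota>: "\<And>x. \<iota> x \<in> K" "\<And>x y. \<forall>\<alpha>\<in>U. x \<alpha> = y \<alpha> \<Longrightarrow> \<iota> x = \<iota> y"
      "\<And>A w. A \<in> K \<Longrightarrow> \<exists>x. \<iota> x = A \<and> h \<circ> x = w"
  shows "I_analytic I V (\<Union>K)"
proof -
  let ?T = "I_topology I UNIV"
  from \<open>U \<in> I\<close> have T: "topspace ?T = UNIV" "continuous_map ?T ?T ((\<circ>) h)"
    using topspace_I_topology_UNIV continuous_map_I_topology_UNIV_comp by blast+
  have fibres: "openin ?T {x \<in> topspace ?T. \<iota> x = A}" for A
    using \<open>U \<in> I\<close> \<iota>(2) T(1) by (intro openin_I_topology_UNIV_if_determined) auto
  have \<iota>_T: "\<iota> \<in> topspace ?T \<rightarrow> K"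
    "\<And>A w. A \<in> K \<Longrightarrow> w \<in> topspace ?T \<Longrightarrow> \<exists>x\<in>topspace ?T. \<iota> x = A \<and> h \<circ> x = w"
    using \<iota>(1,3) T(1) by auto
  have "\<forall>A\<in>K. \<exists>C \<Phi>. closedin ?T C \<and> continuous_map ?T (I_topology I V) \<Phi> \<and> \<Phi> ` C = A"
    using assms(2,3) by (auto simp: I_analytic_def)
  then obtain C \<Phi> where C\<Phi>: "\<And>A. A \<in> K \<Longrightarrow> closedin ?T (C A)"
    "\<And>A. A \<in> K \<Longrightarrow> continuous_map ?T (I_topology I V) (\<Phi> A)"
    "\<And>A. A \<in> K \<Longrightarrow> \<Phi> A ` C A = A"
    by metis
  obtain C' \<Phi>' where "closedin ?T C'" "continuous_map ?T (I_topology I V) \<Phi>'"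
    "\<Phi>' ` C' = (\<Union>A\<in>K. \<Phi> A ` C A)"
    by (rule Union_closed_continuous_images_fibrewise[OF fibres \<iota>_T(1) T(2) C\<Phi>(1,2) \<iota>_T(2)])
  moreover have "(\<Union>A\<in>K. \<Phi> A ` C A) = \<Union>K"
    using C\<Phi>(3) by auto
  ultimately show ?thesis
    unfolding I_analytic_def by metis
qed

theorem theorem5p2:
  fixes r :: "'k rel" and I :: "'k set set" and V :: "'k set"
    and \<A> :: "('k \<Rightarrow> 'k) set set"
  assumes "uncountable_regular_cardinal r"
    and "good_ideal r I"
    and "\<exists>A\<in>I. \<not> bounded_in r A"
    and "nu_choice r V"
    and "\<forall>A\<in>\<A>. I_analytic I V A"
    and "(card_of \<A>, card_of (Pow (UNIV :: 'k set))) \<in> ordLeq"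
  shows "I_analytic I V (\<Union>\<A>)"
proof (cases "\<A> - {{}} = {}")
  case True
  then show ?thesis by (auto simp: I_analytic_def)
next
  case False
  have r: "Card_order r" "Field r = UNIV" "regularCard r" "infinite (UNIV :: 'k set)"
    using assms(1) countable_finite by (auto simp: uncountable_regular_cardinal_def)
  obtain U where "U \<in> I" "\<not> bounded_in r U"
    using assms(3) by blast
  then obtain b :: "'k \<Rightarrow> 'k" where "bij_betw b UNIV U"
    using card_of_unbounded_ordIso_UNIV[OF r(1-3)] card_of_ordIso ordIso_symmetric by blast
  then have "(card_of (Pow (UNIV :: 'k set)), card_of (Pow U)) \<in> ordIso"
    using bij_betw_image_Pow card_of_ordIso by blast
  moreover have "(card_of (\<A> - {{}}), card_of \<A>) \<in> ordLeq"
    by (rule card_of_mono1) blast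
  ultimately have K_le: "(card_of (\<A> - {{}}), card_of (Pow U)) \<in> ordLeq"
    using assms(6) ordLeq_transitive ordLeq_ordIso_trans by blast
  obtain \<iota> and h :: "'k \<Rightarrow> 'k"
    where \<iota>: "\<And>x. \<iota> x \<in> \<A> - {{}}" "\<And>x y. \<forall>\<alpha>\<in>U. x \<alpha> = y \<alpha> \<Longrightarrow> \<iota> x = \<iota> y"
      "\<And>A w. A \<in> \<A> - {{}} \<Longrightarrow> \<exists>x. \<iota> x = A \<and> h \<circ> x = w"
    using exists_coding_determined_on[OF r(4) K_le False] by blast
  have "I_analytic I V (\<Union>(\<A> - {{}}))"
    using assms(5) by (intro I_analytic_Union_coded[OF \<open>U \<in> I\<close> _ _ \<iota>]) auto
  moreover have "\<Union>(\<A> - {{}}) = \<Union>\<A>"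
    by blast
  ultimately show ?thesis by simp
qed

end
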